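(* Let $0<s_1<s_2$, $m\ge1$, and set $\alpha=\frac1{s_1}+\frac1{s_2}$, $\beta_1=-\frac1{s_1}$, $\beta_2=-\frac1{s_2}$. Then the matrix $A_{2m}^{(\beta_2,0)}(\alpha,\beta_1,\beta_2)$ has no eigenvalue in the interval $\Gamma=\big(\frac2{s_2},\frac2{s_1}\big)$; equivalently, no eigenvalue $\lambda$ with $\lambda-\alpha\in(\beta_1-\beta_2,\beta_2-\beta_1)$.
   Context: $A_{2m}^{(a,b)}(\alpha,\beta_1,\beta_2)\in\mathbb R^{2m\times 2m}$ denotes the symmetric tridiagonal matrix with diagonal entries $(\alpha+a,\alpha,\dots,\alpha,\alpha+b)$ and $(i,i+1)$ off-diagonal entries equal to $\beta_1$ for $i$ odd and $\beta_2$ for $i$ even, $1\le i\le 2m-1$. (Removing the central row and column of the defect capacitance matrix yields a block-diagonal matrix whose blocks are this matrix and its conjugate by the reversal permutation.) *)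

theory Defs
  imports "Jordan_Normal_Form.Char_Poly"
begin

text \<open>The symmetric tridiagonal matrix A_n^{(a,b)}(alpha,beta1,beta2) of size n x n
 (0-based indices): diagonal alpha, with a added to the first and b added to the last
 diagonal entry; the (k,k+1) and (k+1,k) entries are beta1 if k is even (i.e. the
 1-based index k+1 is odd) and beta2 if k is odd.\<close>
definition tridiagA :: "nat \<Rightarrow> real \<Rightarrow> real \<Rightarrow> real \<Rightarrow> real \<Rightarrow> real \<Rightarrow> real mat" where
  "tridiagA n a b alpha beta1 beta2 = mat n n (\<lambda>(i, j).
     if i = j then alpha + (if i = 0 then a else 0) + (if i = n - 1 then b else 0)
     else if j = i + 1 then (if even i then beta1 else beta2)
     else if i = j + 1 then (if even j then beta1 else beta2)
     else 0)"

end

theory Submission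
  imports Defs
begin

text \<open>Put p = 1/s1, q = 1/s2 and \<lambda> = \<alpha> + \<mu>, so that \<lambda> \<in> \<Gamma> means |\<mu>| < p - q.
  Read row by row, A w = \<lambda> w is a recurrence determining w from w(0). The first row gives
  |w(1)| < |w(0)| unless w(0) = 0, and because of the gap each further pair of rows carries
  |w(2j+1)| < |w(2j)| over to j+1. The last row reads p |w(2m-2)| = |\<mu>| |w(2m-1)|, which
  contradicts this since |\<mu>| < p; hence w(0) = 0, and then w = 0.\<close>

definition alternating :: "real \<Rightarrow> real \<Rightarrow> nat \<Rightarrow> real" where
  "alternating b1 b2 k = (if even k then b1 else b2)"

lemma index_tridiagA:
  assumes "i < n" "j < n"
  shows "tridiagA n a b al b1 b2 $$ (i, j) =
     (if j + 1 = i then alternating b1 b2 j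
      else if j = i then al + (if i = 0 then a else 0) + (if i = n - 1 then b else 0)
      else if j = i + 1 then alternating b1 b2 i else 0)"
  using assms by (auto simp: tridiagA_def alternating_def)

lemma tridiagA_mult_vec_nth:
  assumes i: "i < n" and v: "v \<in> carrier_vec n"
  shows "(tridiagA n a b al b1 b2 *\<^sub>v v) $ i =
     (if 0 < i then alternating b1 b2 (i - 1) * v $ (i - 1) else 0)
     + (al + (if i = 0 then a else 0) + (if i = n - 1 then b else 0)) * v $ i
     + (if i + 1 < n then alternating b1 b2 i * v $ (i + 1) else 0)"
proof -
  let ?d = "al + (if i = 0 then a else 0) + (if i = n - 1 then b else 0)"
  have "(tridiagA n a b al b1 b2 *\<^sub>v v) $ i
      = (\<Sum>k \<in> {0..<n}. tridiagA n a b al b1 b2 $$ (i, k) * v $ k)"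
    using i v by (simp add: tridiagA_def mult_mat_vec_def scalar_prod_def)
  also have "\<dots> = (\<Sum>k \<in> {0..<n}. (if k + 1 = i then alternating b1 b2 (i - 1) * v $ (i - 1) else 0)
      + (if k = i then ?d * v $ i else 0)
      + (if k = i + 1 then alternating b1 b2 i * v $ (i + 1) else 0))"
    by (rule sum.cong) (auto simp: index_tridiagA i)
  also have "\<dots> = (if 0 < i then alternating b1 b2 (i - 1) * v $ (i - 1) else 0)
     + ?d * v $ i + (if i + 1 < n then alternating b1 b2 i * v $ (i + 1) else 0)"
  proof -
    have "{0..<n} \<inter> {k. k + 1 = i} = (if 0 < i then {i - 1} else {})" using i by auto
    then show ?thesis using i by (simp add: sum.distrib sum.If_cases)
  qed
  finally show ?thesis .
qed

lemma contraction_step: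
  fixes p q mu x y x' y' :: real
  assumes "0 < q" "q < p" "\<bar>mu\<bar> < p - q" "\<bar>y\<bar> < \<bar>x\<bar>"
    and x': "q * x' = - (p * x + mu * y)" and y': "p * y' = - (mu * x' + q * y)"
  shows "\<bar>y'\<bar> < \<bar>x'\<bar>"
proof -
  define c where "c = p - \<bar>mu\<bar>"
  have c: "q < c" using assms by (simp add: c_def)
  have "c * \<bar>y\<bar> < p * \<bar>x\<bar> - \<bar>mu\<bar> * \<bar>y\<bar>"
    using assms by (simp add: c_def algebra_simps)
  also have "\<dots> \<le> \<bar>p * x + mu * y\<bar>"
    using abs_triangle_ineq2[of "p * x" "- (mu * y)"] assms by (simp add: abs_mult)
  also have "\<dots> = \<bar>q * x'\<bar>"
    by (simp only: x' abs_minus_cancel)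
  also have "\<dots> = q * \<bar>x'\<bar>"
    using \<open>0 < q\<close> by (simp add: abs_mult)
  finally have cy: "c * \<bar>y\<bar> < q * \<bar>x'\<bar>" .
  have "c * (q * \<bar>y\<bar>) < c * (c * \<bar>x'\<bar>)"
  proof -
    have "c * (q * \<bar>y\<bar>) < q * (q * \<bar>x'\<bar>)"
      using mult_strict_left_mono[OF cy \<open>0 < q\<close>] by (simp add: algebra_simps)
    also have "\<dots> \<le> c * (c * \<bar>x'\<bar>)"
      using c \<open>0 < q\<close> by (intro mult_mono) auto
    finally show ?thesis .
  qed
  then have qy: "q * \<bar>y\<bar> < c * \<bar>x'\<bar>"
    using c \<open>0 < q\<close> by simp
  have "p * \<bar>y'\<bar> = \<bar>p * y'\<bar>"
    using \<open>0 < q\<close> \<open>q < p\<close> by (simp add: abs_mult)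
  also have "\<dots> = \<bar>mu * x' + q * y\<bar>"
    by (simp only: y' abs_minus_cancel)
  also have "\<dots> \<le> \<bar>mu\<bar> * \<bar>x'\<bar> + q * \<bar>y\<bar>"
    using abs_triangle_ineq[of "mu * x'" "q * y"] \<open>0 < q\<close> by (simp add: abs_mult)
  also have "\<dots> < p * \<bar>x'\<bar>"
    using qy by (simp add: c_def algebra_simps)
  finally show ?thesis using \<open>0 < q\<close> \<open>q < p\<close> by simp
qed

text \<open>The rows of \<open>A w = \<lambda> w\<close> for \<open>A = tridiagA (2 * Suc k) (-q) 0 (p + q) (-p) (-q)\<close> and
  \<open>\<mu> = \<lambda> - p - q\<close>, indexed from \<open>0\<close>.\<close>
locale dimer_recurrence =
  fixes p q mu :: real and k :: nat and w :: "nat \<Rightarrow> real"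
  assumes q_pos: "0 < q" and q_less_p: "q < p" and mu_gap: "\<bar>mu\<bar> < p - q"
    and first_row: "p * w 1 = - ((mu + q) * w 0)"
    and odd_row: "j < k \<Longrightarrow> q * w (2 * j + 2) = - (p * w (2 * j) + mu * w (2 * j + 1))"
    and even_row: "j < k \<Longrightarrow> p * w (2 * j + 3) = - (mu * w (2 * j + 2) + q * w (2 * j + 1))"
    and last_row: "p * w (2 * k) = - (mu * w (2 * k + 1))"
begin

lemma zero_from_first_zero:
  assumes "w 0 = 0" and "j \<le> k"
  shows "w (2 * j) = 0 \<and> w (2 * j + 1) = 0"
  using \<open>j \<le> k\<close>
proof (induction j)
  case 0
  show ?case using first_row assms q_pos q_less_p by simp
next
  case (Suc j)
  then have "w (2 * j) = 0" "w (2 * j + 1) = 0" "j < k" by auto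
  moreover from this have "w (2 * j + 2) = 0"
    using odd_row[of j] q_pos by simp
  moreover from calculation have "w (2 * j + 3) = 0"
    using even_row[of j] q_pos q_less_p by simp
  ultimately show ?case by (simp add: eval_nat_numeral)
qed

lemma abs_odd_less_even:
  assumes "w 0 \<noteq> 0" and "j \<le> k"
  shows "\<bar>w (2 * j + 1)\<bar> < \<bar>w (2 * j)\<bar>"
  using \<open>j \<le> k\<close>
proof (induction j)
  case 0
  have "p * \<bar>w 1\<bar> = \<bar>mu + q\<bar> * \<bar>w 0\<bar>"
    using arg_cong[OF first_row, of abs] q_pos q_less_p by (simp add: abs_mult)
  also have "\<dots> < p * \<bar>w 0\<bar>"
    using mu_gap q_pos assms by (intro mult_strict_right_mono) (auto simp: abs_less_iff)
  finally show ?case using q_pos q_less_p by simp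
next
  case (Suc j)
  then have "\<bar>w (2 * j + 1)\<bar> < \<bar>w (2 * j)\<bar>" "j < k" by auto
  then have "\<bar>w (2 * j + 3)\<bar> < \<bar>w (2 * j + 2)\<bar>"
    using contraction_step[OF q_pos q_less_p mu_gap] odd_row even_row by blast
  then show ?case by (simp add: eval_nat_numeral)
qed

lemma first_zero: "w 0 = 0"
proof (rule ccontr)
  assume "w 0 \<noteq> 0"
  then have less: "\<bar>w (2 * k + 1)\<bar> < \<bar>w (2 * k)\<bar>"
    using abs_odd_less_even by simp
  have "p * \<bar>w (2 * k)\<bar> = \<bar>mu\<bar> * \<bar>w (2 * k + 1)\<bar>"
    using arg_cong[OF last_row, of abs] q_pos q_less_p by (simp add: abs_mult)
  also have "\<dots> \<le> \<bar>mu\<bar> * \<bar>w (2 * k)\<bar>"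
    using less by (simp add: mult_left_mono)
  also have "\<dots> < p * \<bar>w (2 * k)\<bar>"
    using mu_gap q_pos less by (intro mult_strict_right_mono) auto
  finally show False by simp
qed

lemma vanishes:
  assumes "i < 2 * Suc k"
  shows "w i = 0"
proof -
  have "w (2 * (i div 2)) = 0 \<and> w (2 * (i div 2) + 1) = 0"
    using zero_from_first_zero[OF first_zero] assms by simp
  moreover have "i = 2 * (i div 2) \<or> i = 2 * (i div 2) + 1" by presburger
  ultimately show ?thesis by metis
qed

end

lemma tridiagA_dimer_eigenvector_zero:
  fixes p q lam :: real
  assumes "0 < q" "q < p" "\<bar>lam - p - q\<bar> < p - q"
    and v: "v \<in> carrier_vec (2 * Suc k)"
    and eig: "tridiagA (2 * Suc k) (- q) 0 (p + q) (- p) (- q) *\<^sub>v v = lam \<cdot>\<^sub>v v"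
  shows "v = 0\<^sub>v (2 * Suc k)"
proof -
  have row: "lam * v $ i = (if 0 < i then alternating (- p) (- q) (i - 1) * v $ (i - 1) else 0)
     + (p + q + (if i = 0 then - q else 0)) * v $ i
     + (if i + 1 < 2 * Suc k then alternating (- p) (- q) i * v $ (i + 1) else 0)"
    if "i < 2 * Suc k" for i
    using tridiagA_mult_vec_nth[OF that v, of "- q" 0] arg_cong[OF eig, of "\<lambda>u. u $ i"] that v
    by simp
  interpret dimer_recurrence p q "lam - p - q" k "\<lambda>i. v $ i"
  proof
    show "p * v $ 1 = - ((lam - p - q + q) * v $ 0)"
      using row[of 0] by (simp add: alternating_def algebra_simps)
    show "q * v $ (2 * j + 2) = - (p * v $ (2 * j) + (lam - p - q) * v $ (2 * j + 1))"
      if "j < k" for j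
      using row[of "2 * j + 1"] that by (simp add: alternating_def algebra_simps)
    show "p * v $ (2 * j + 3) = - ((lam - p - q) * v $ (2 * j + 2) + q * v $ (2 * j + 1))"
      if "j < k" for j
      using row[of "2 * j + 2"] that by (simp add: alternating_def algebra_simps numeral_3_eq_3)
    show "p * v $ (2 * k) = - ((lam - p - q) * v $ (2 * k + 1))"
      using row[of "2 * k + 1"] by (simp add: alternating_def algebra_simps)
  qed (use assms in auto)
  show ?thesis
    using v vanishes by (intro eq_vecI) auto
qed

theorem mainTheorem6:
  fixes s1 s2 :: real and m :: nat
  assumes "0 < s1" and "s1 < s2" and "1 \<le> m"
  defines "alpha \<equiv> 1 / s1 + 1 / s2"
      and "beta1 \<equiv> - 1 / s1"
      and "beta2 \<equiv> - 1 / s2"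
  shows "\<not> (\<exists>lam. eigenvalue (tridiagA (2 * m) beta2 0 alpha beta1 beta2) lam
                 \<and> 2 / s2 < lam \<and> lam < 2 / s1)"
proof
  assume "\<exists>lam. eigenvalue (tridiagA (2 * m) beta2 0 alpha beta1 beta2) lam
                 \<and> 2 / s2 < lam \<and> lam < 2 / s1"
  then obtain lam v where ev: "eigenvector (tridiagA (2 * m) beta2 0 alpha beta1 beta2) v lam"
    and lam: "2 / s2 < lam" "lam < 2 / s1"
    unfolding eigenvalue_def by blast
  obtain k where m: "m = Suc k" using \<open>1 \<le> m\<close> by (cases m) auto
  have entries: "beta2 = - (1 / s2)" "alpha = 1 / s1 + 1 / s2" "beta1 = - (1 / s1)"
    by (simp_all add: alpha_def beta1_def beta2_def)
  have v: "v \<in> carrier_vec (2 * Suc k)" "v \<noteq> 0\<^sub>v (2 * Suc k)"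
    and eig: "tridiagA (2 * Suc k) (- (1 / s2)) 0 (1 / s1 + 1 / s2) (- (1 / s1)) (- (1 / s2)) *\<^sub>v v
      = lam \<cdot>\<^sub>v v"
    using ev unfolding eigenvector_def m entries by (auto simp: tridiagA_def)
  have "0 < 1 / s2" "1 / s2 < 1 / s1"
    using assms by (simp_all add: frac_less2)
  moreover have "\<bar>lam - 1 / s1 - 1 / s2\<bar> < 1 / s1 - 1 / s2"
    using lam by (simp add: abs_less_iff)
  ultimately show False
    using tridiagA_dimer_eigenvector_zero[OF _ _ _ v(1) eig] v(2) by blast
qed

end
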